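(* Let $A,B\in\mathcal{F}_2$ be commonly ordered configurations of two robots. There exists a feasible schedule $M$ from $A$ to $B$ with $\Sigma(M)=\sum_{i=1}^2\|a_i-b_i\|$ in which each robot makes at most one turn.
   Context: Robots are axis-parallel unit squares: a robot at $p$ occupies $p+\boxdot$, $\boxdot=\{q:\|q\|_\infty\le1/2\}$. Distances use the $L_1$ norm $\|p\|=|x(p)|+|y(p)|$. A configuration of two robots is a pair $(p_1,p_2)$ with $\|p_1-p_2\|_\infty\ge 1$; $\mathcal{F}_2$ is their set. A trajectory from $a$ to $b$ over $T=[t_0,t_1]$ is a $1$-Lipschitz (w.r.t. $L_1$) map $m:T\to\mathbb{R}^2$, $m(t_0)=a$, $m(t_1)=b$, whose image is a polygonal chain; a turn is a point of the image where two segments of different orientations meet. A schedule $M=(m_1,m_2)$ is feasible if $M(t)\in\mathcal{F}_2$ for all $t$; $\Sigma(M)$ is the sum of the lengths of the chains. The four orderings are $\mathcal{F}_2^{\rightarrow}=\{(p_1,p_2)\in\mathcal{F}_2: x(p_1)\ge x(p_2)+1\}$, $\mathcal{F}_2^{\leftarrow}=\{x(p_2)\ge x(p_1)+1\}$, $\mathcal{F}_2^{\uparrow}=\{y(p_1)\ge y(p_2)+1\}$, $\mathcal{F}_2^{\downarrow}=\{y(p_2)\ge y(p_1)+1\}$. Two configurations are commonly ordered if both lie in the same ordering. *)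

theory Defs
  imports "HOL-Analysis.Analysis"
begin

type_synonym pt = "real \<times> real"

definition l1dist :: "pt \<Rightarrow> pt \<Rightarrow> real" where
  "l1dist p q = \<bar>fst p - fst q\<bar> + \<bar>snd p - snd q\<bar>"

definition linfdist :: "pt \<Rightarrow> pt \<Rightarrow> real" where
  "linfdist p q = max \<bar>fst p - fst q\<bar> \<bar>snd p - snd q\<bar>"

definition F2 :: "(pt \<times> pt) set" where
  "F2 = {(p1, p2). linfdist p1 p2 \<ge> 1}"

definition F2_right :: "(pt \<times> pt) set" where
  "F2_right = {(p1, p2). (p1, p2) \<in> F2 \<and> fst p1 \<ge> fst p2 + 1}"
definition F2_left :: "(pt \<times> pt) set" where
  "F2_left = {(p1, p2). (p1, p2) \<in> F2 \<and> fst p2 \<ge> fst p1 + 1}"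
definition F2_up :: "(pt \<times> pt) set" where
  "F2_up = {(p1, p2). (p1, p2) \<in> F2 \<and> snd p1 \<ge> snd p2 + 1}"
definition F2_down :: "(pt \<times> pt) set" where
  "F2_down = {(p1, p2). (p1, p2) \<in> F2 \<and> snd p2 \<ge> snd p1 + 1}"

definition commonly_ordered :: "(pt \<times> pt) \<Rightarrow> (pt \<times> pt) \<Rightarrow> bool" where
  "commonly_ordered A B \<longleftrightarrow>
     (\<exists>S \<in> {F2_right, F2_left, F2_up, F2_down}. A \<in> S \<and> B \<in> S)"

fun chain_image :: "pt list \<Rightarrow> pt set" where
  "chain_image [] = {}"
| "chain_image [p] = {p}"
| "chain_image (p # q # r) = closed_segment p q \<union> chain_image (q # r)"

fun chain_len :: "pt list \<Rightarrow> real" where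
  "chain_len [] = 0"
| "chain_len [p] = 0"
| "chain_len (p # q # r) = l1dist p q + chain_len (q # r)"

definition different_orientation :: "pt \<Rightarrow> pt \<Rightarrow> pt \<Rightarrow> bool" where
  "different_orientation p q r \<longleftrightarrow>
     (fst q - fst p) * (snd r - snd q) \<noteq> (snd q - snd p) * (fst r - fst q)"

definition turns :: "pt list \<Rightarrow> nat" where
  "turns ps = card {i. 0 < i \<and> i + 1 < length ps \<and>
                       different_orientation (ps ! (i - 1)) (ps ! i) (ps ! (i + 1))}"

definition trajectory :: "(real \<Rightarrow> pt) \<Rightarrow> pt \<Rightarrow> pt \<Rightarrow> real \<Rightarrow> real \<Rightarrow> pt list \<Rightarrow> bool" where
  "trajectory m a b t0 t1 ps \<longleftrightarrow>
     t0 \<le> t1 \<and> m t0 = a \<and> m t1 = b \<and>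
     (\<forall>s\<in>{t0..t1}. \<forall>t\<in>{t0..t1}. l1dist (m s) (m t) \<le> \<bar>s - t\<bar>) \<and>
     ps \<noteq> [] \<and> hd ps = a \<and> last ps = b \<and>
     (\<forall>i. i + 1 < length ps \<longrightarrow> ps ! i \<noteq> ps ! (i + 1)) \<and>
     m ` {t0..t1} = chain_image ps"

definition feasible :: "(real \<Rightarrow> pt) \<Rightarrow> (real \<Rightarrow> pt) \<Rightarrow> real \<Rightarrow> real \<Rightarrow> bool" where
  "feasible m1 m2 t0 t1 \<longleftrightarrow> (\<forall>t\<in>{t0..t1}. (m1 t, m2 t) \<in> F2)"

end

theory Submission
  imports Defs
begin

text \<open>Each robot follows an L1-shortest path with a single corner: it first moves along the axis
  that does not separate the robots and then along the separating one.  If \<open>\<phi>\<close> is the separating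
  coordinate (up to sign), the half-space \<open>{(p, q). \<phi> q + 1 \<le> \<phi> p}\<close> is a convex part of F2.
  Both robots travel their first legs simultaneously, which leaves \<open>\<phi>\<close> unchanged, and then their
  second legs one after the other.  The joint configuration therefore runs along a polygonal path
  with four vertices in configuration space, and it suffices that these lie in the half-space.
  The only vertex in doubt is the one where just the first mover has arrived: if robot 1 cannot go
  first, i.e. \<open>\<phi> b1 < \<phi> a2 + 1\<close>, then the separation of both A and B gives
  \<open>\<phi> b2 + 1 < \<phi> a1\<close>, so robot 2 can.\<close>

lemma l1dist_nonneg: "0 \<le> l1dist p q"
  unfolding l1dist_def by simp

definition ramp :: "real \<Rightarrow> real \<Rightarrow> real \<Rightarrow> real" where
  "ramp D s t = min 1 (max 0 ((t - s) / D))"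

lemma ramp_eq_0: "0 < D \<Longrightarrow> t \<le> s \<Longrightarrow> ramp D s t = 0"
  unfolding ramp_def by (simp add: divide_nonpos_pos)

lemma ramp_eq_1: "0 < D \<Longrightarrow> s + D \<le> t \<Longrightarrow> ramp D s t = 1"
  unfolding ramp_def by (simp add: field_simps)

lemma ramp_bounds: "0 \<le> ramp D s t" "ramp D s t \<le> 1"
  unfolding ramp_def by auto

lemma ramp_lipschitz:
  assumes "0 < D"
  shows "\<bar>ramp D s t - ramp D s t'\<bar> \<le> \<bar>t - t'\<bar> / D"
proof -
  have "\<bar>ramp D s t - ramp D s t'\<bar> \<le> \<bar>(t - s) / D - (t' - s) / D\<bar>"
    unfolding ramp_def by (simp add: abs_if min_def max_def)
  also have "\<dots> = \<bar>t - t'\<bar> / D"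
    using assms by (simp add: diff_divide_distrib[symmetric])
  finally show ?thesis .
qed

lemma ramp_image:
  assumes "0 < D" "r \<le> s" "s + D \<le> T"
  shows "ramp D s ` {r..T} = {0..1}"
proof
  show "ramp D s ` {r..T} \<subseteq> {0..1}" using ramp_bounds by auto
  show "{0..1} \<subseteq> ramp D s ` {r..T}"
  proof
    fix u :: real assume u: "u \<in> {0..1}"
    then have "0 \<le> u * D" "u * D \<le> D" using assms by (auto intro: mult_left_le_one_le)
    then have "s + u * D \<in> {r..T}" using assms unfolding atLeastAtMost_iff by linarith
    moreover have "ramp D s (s + u * D) = u" using u assms by (simp add: ramp_def)
    ultimately show "u \<in> ramp D s ` {r..T}" by (metis image_eqI)
  qed
qed

definition two_leg_motion :: "real \<Rightarrow> real \<Rightarrow> pt \<Rightarrow> pt \<Rightarrow> pt \<Rightarrow> real \<Rightarrow> pt" where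
  "two_leg_motion D s a c b t = a + ramp D 0 t *\<^sub>R (c - a) + ramp D s t *\<^sub>R (b - c)"

lemma two_leg_motion_lipschitz:
  assumes "0 < D" "l1dist a c + l1dist c b \<le> D"
  shows "l1dist (two_leg_motion D s a c b t) (two_leg_motion D s a c b t') \<le> \<bar>t - t'\<bar>"
proof -
  let ?\<delta>\<^sub>1 = "ramp D 0 t - ramp D 0 t'" and ?\<delta>\<^sub>2 = "ramp D s t - ramp D s t'"
  have "l1dist (two_leg_motion D s a c b t) (two_leg_motion D s a c b t')
      = \<bar>?\<delta>\<^sub>1 * (fst c - fst a) + ?\<delta>\<^sub>2 * (fst b - fst c)\<bar>
        + \<bar>?\<delta>\<^sub>1 * (snd c - snd a) + ?\<delta>\<^sub>2 * (snd b - snd c)\<bar>"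
    unfolding two_leg_motion_def l1dist_def by (simp add: algebra_simps)
  also have "\<dots> \<le> \<bar>?\<delta>\<^sub>1\<bar> * l1dist a c + \<bar>?\<delta>\<^sub>2\<bar> * l1dist c b"
  proof -
    have triangle: "\<bar>?\<delta>\<^sub>1 * x + ?\<delta>\<^sub>2 * y\<bar> \<le> \<bar>?\<delta>\<^sub>1\<bar> * \<bar>x\<bar> + \<bar>?\<delta>\<^sub>2\<bar> * \<bar>y\<bar>" for x y :: real
      by (metis abs_mult abs_triangle_ineq)
    show ?thesis
      using triangle[of "fst c - fst a" "fst b - fst c"] triangle[of "snd c - snd a" "snd b - snd c"]
      unfolding l1dist_def by (simp add: abs_minus_commute distrib_left)
  qed
  also have "\<dots> \<le> \<bar>t - t'\<bar> / D * l1dist a c + \<bar>t - t'\<bar> / D * l1dist c b"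
    using assms(1) by (intro add_mono mult_right_mono ramp_lipschitz l1dist_nonneg)
  also have "\<dots> = \<bar>t - t'\<bar> * ((l1dist a c + l1dist c b) / D)"
    using assms(1) by (simp add: field_simps)
  also have "\<dots> \<le> \<bar>t - t'\<bar>"
    using assms by (intro mult_left_le) auto
  finally show ?thesis .
qed

lemma two_leg_motion_image:
  assumes "0 < D" "D \<le> s" "s + D \<le> T"
  shows "two_leg_motion D s a c b ` {0..T} = closed_segment a c \<union> closed_segment c b"
proof -
  have "two_leg_motion D s a c b ` {0..s} = (\<lambda>u. (1 - u) *\<^sub>R a + u *\<^sub>R c) ` ramp D 0 ` {0..s}"
    unfolding image_image
    by (intro image_cong refl) (simp add: two_leg_motion_def ramp_eq_0 assms algebra_simps)
  also have "\<dots> = closed_segment a c"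
    using assms by (simp add: ramp_image closed_segment_image_interval)
  finally have first: "two_leg_motion D s a c b ` {0..s} = closed_segment a c" .
  have "two_leg_motion D s a c b ` {s..T} = (\<lambda>u. (1 - u) *\<^sub>R c + u *\<^sub>R b) ` ramp D s ` {s..T}"
    unfolding image_image using assms
    by (intro image_cong refl) (simp add: two_leg_motion_def ramp_eq_1 algebra_simps)
  also have "\<dots> = closed_segment c b"
    using assms by (simp add: ramp_image closed_segment_image_interval)
  finally have second: "two_leg_motion D s a c b ` {s..T} = closed_segment c b" .
  have "{0..T} = {0..s} \<union> {s..T}" using assms by auto
  then show ?thesis by (simp add: image_Un first second)
qed

lemma chain_image_hd: "ps \<noteq> [] \<Longrightarrow> hd ps \<in> chain_image ps"
  by (induction ps rule: chain_image.induct) auto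

lemma chain_image_remdups_adj: "chain_image (remdups_adj ps) = chain_image ps"
proof (induction ps rule: remdups_adj.induct)
  case (3 x y xs)
  show ?case
  proof (cases "x = y")
    case True
    then show ?thesis using 3 chain_image_hd[of "y # xs"] by auto
  next
    case False
    then have "remdups_adj (x # y # xs) = x # y # tl (remdups_adj (y # xs))" by simp
    then show ?thesis using 3 False by (metis chain_image.simps(3) remdups_adj_Cons_alt)
  qed
qed auto

lemma chain_len_remdups_adj: "chain_len (remdups_adj ps) = chain_len ps"
proof (induction ps rule: remdups_adj.induct)
  case (3 x y xs)
  show ?case
  proof (cases "x = y")
    case True
    then show ?thesis using 3 by (simp add: l1dist_def)
  next
    case False
    then have "remdups_adj (x # y # xs) = x # y # tl (remdups_adj (y # xs))" by simp
    then show ?thesis using 3 False by (metis chain_len.simps(3) remdups_adj_Cons_alt)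
  qed
qed auto

lemma turns_le_1_if_length_le_3: "length ps \<le> 3 \<Longrightarrow> turns ps \<le> 1"
proof -
  assume "length ps \<le> 3"
  then have "{i. 0 < i \<and> i + 1 < length ps \<and>
      different_orientation (ps ! (i - 1)) (ps ! i) (ps ! (i + 1))} \<subseteq> {1}"
    by auto
  from card_mono[OF _ this] show ?thesis unfolding turns_def by simp
qed

text \<open>Removing adjacent duplicates drops the corner when it coincides with an endpoint, since
  consecutive vertices of a trajectory must be distinct.\<close>
lemma trajectory_two_leg_motion:
  assumes "0 < D" "D \<le> s" "s + D \<le> T" "l1dist a c + l1dist c b \<le> D"
  shows "trajectory (two_leg_motion D s a c b) a b 0 T (remdups_adj [a, c, b])"
  unfolding trajectory_def
proof (intro conjI ballI allI impI)
  show "two_leg_motion D s a c b 0 = a" "two_leg_motion D s a c b T = b"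
    using assms by (simp_all add: two_leg_motion_def ramp_eq_0 ramp_eq_1)
  show "two_leg_motion D s a c b ` {0..T} = chain_image (remdups_adj [a, c, b])"
    unfolding chain_image_remdups_adj using assms ends_in_segment(2)[of c b]
    by (simp add: two_leg_motion_image insert_absorb)
  show "l1dist (two_leg_motion D s a c b t) (two_leg_motion D s a c b t') \<le> \<bar>t - t'\<bar>" for t t'
    using assms by (intro two_leg_motion_lipschitz)
  show "remdups_adj [a, c, b] ! i \<noteq> remdups_adj [a, c, b] ! (i + 1)"
    if "i + 1 < length (remdups_adj [a, c, b])" for i
    using remdups_adj_adjacent that by (metis Suc_eq_plus1)
qed (use assms in auto)

lemma feasible_commute: "feasible m1 m2 t0 t1 \<longleftrightarrow> feasible m2 m1 t0 t1"
  unfolding feasible_def F2_def linfdist_def by (simp add: abs_minus_commute)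

lemma feasible_two_leg_motions:
  assumes "convex H" "H \<subseteq> F2" "0 < D"
    and "(a1, a2) \<in> H" "(c1, c2) \<in> H" "(b1, c2) \<in> H" "(b1, b2) \<in> H"
  shows "feasible (two_leg_motion D D a1 c1 b1) (two_leg_motion D (2 * D) a2 c2 b2) t0 t1"
proof -
  have "(two_leg_motion D D a1 c1 b1 t, two_leg_motion D (2 * D) a2 c2 b2 t) \<in> H" for t
  proof -
    let ?r0 = "ramp D 0 t" and ?r1 = "ramp D D t" and ?r2 = "ramp D (2 * D) t"
    have on_segment: "(1 - u) *\<^sub>R X + u *\<^sub>R Y \<in> H" if "X \<in> H" "Y \<in> H" "0 \<le> u" "u \<le> 1" for X Y u
      using convexD_alt assms(1) that by blast
    consider "t \<le> D" | "D \<le> t" "t \<le> 2 * D" | "2 * D \<le> t" by linarith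
    then show ?thesis
    proof cases
      case 1
      then have "?r1 = 0" "?r2 = 0" using assms by (simp_all add: ramp_eq_0)
      then have joint: "(two_leg_motion D D a1 c1 b1 t, two_leg_motion D (2 * D) a2 c2 b2 t)
          = (1 - ?r0) *\<^sub>R (a1, a2) + ?r0 *\<^sub>R (c1, c2)"
        by (simp add: two_leg_motion_def algebra_simps)
      show ?thesis unfolding joint by (intro on_segment assms ramp_bounds)
    next
      case 2
      then have "?r0 = 1" "?r2 = 0" using assms by (simp_all add: ramp_eq_0 ramp_eq_1)
      then have joint: "(two_leg_motion D D a1 c1 b1 t, two_leg_motion D (2 * D) a2 c2 b2 t)
          = (1 - ?r1) *\<^sub>R (c1, c2) + ?r1 *\<^sub>R (b1, c2)"
        by (simp add: two_leg_motion_def algebra_simps)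
      show ?thesis unfolding joint by (intro on_segment assms ramp_bounds)
    next
      case 3
      then have "?r0 = 1" "?r1 = 1" using assms by (simp_all add: ramp_eq_1)
      then have joint: "(two_leg_motion D D a1 c1 b1 t, two_leg_motion D (2 * D) a2 c2 b2 t)
          = (1 - ?r2) *\<^sub>R (b1, c2) + ?r2 *\<^sub>R (b1, b2)"
        by (simp add: two_leg_motion_def algebra_simps)
      show ?thesis unfolding joint by (intro on_segment assms ramp_bounds)
    qed
  qed
  then show ?thesis using assms(2) unfolding feasible_def by blast
qed

definition optimal_one_turn_schedule :: "pt \<Rightarrow> pt \<Rightarrow> pt \<Rightarrow> pt \<Rightarrow> bool" where
  "optimal_one_turn_schedule a1 a2 b1 b2 \<longleftrightarrow>
     (\<exists>t0 t1 m1 m2 ps1 ps2.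
        trajectory m1 a1 b1 t0 t1 ps1 \<and> trajectory m2 a2 b2 t0 t1 ps2 \<and>
        feasible m1 m2 t0 t1 \<and>
        chain_len ps1 + chain_len ps2 = l1dist a1 b1 + l1dist a2 b2 \<and>
        turns ps1 \<le> 1 \<and> turns ps2 \<le> 1)"

lemma optimal_one_turn_schedule_commute:
  "optimal_one_turn_schedule a1 a2 b1 b2 \<Longrightarrow> optimal_one_turn_schedule a2 a1 b2 b1"
  unfolding optimal_one_turn_schedule_def by (metis add.commute feasible_commute)

lemma optimal_one_turn_schedule_if_vertices_in_convex:
  assumes "convex H" "H \<subseteq> F2"
    and "(a1, a2) \<in> H" "(c1, c2) \<in> H" "(b1, c2) \<in> H" "(b1, b2) \<in> H"
    and "l1dist a1 c1 + l1dist c1 b1 = l1dist a1 b1" "l1dist a2 c2 + l1dist c2 b2 = l1dist a2 b2"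
  shows "optimal_one_turn_schedule a1 a2 b1 b2"
proof -
  define D where "D = l1dist a1 b1 + l1dist a2 b2 + 1"
  have D: "0 < D" "l1dist a1 b1 \<le> D" "l1dist a2 b2 \<le> D"
    unfolding D_def using l1dist_nonneg[of a1 b1] l1dist_nonneg[of a2 b2] by linarith+
  let ?ps1 = "remdups_adj [a1, c1, b1]" and ?ps2 = "remdups_adj [a2, c2, b2]"
  have "trajectory (two_leg_motion D D a1 c1 b1) a1 b1 0 (3 * D) ?ps1"
    using D assms(7) by (intro trajectory_two_leg_motion) auto
  moreover have "trajectory (two_leg_motion D (2 * D) a2 c2 b2) a2 b2 0 (3 * D) ?ps2"
    using D assms(8) by (intro trajectory_two_leg_motion) auto
  moreover have "feasible (two_leg_motion D D a1 c1 b1) (two_leg_motion D (2 * D) a2 c2 b2) 0 (3 * D)"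
    using assms D by (intro feasible_two_leg_motions)
  moreover have "chain_len ?ps1 + chain_len ?ps2 = l1dist a1 b1 + l1dist a2 b2"
    unfolding chain_len_remdups_adj using assms(7,8) by simp
  moreover have "turns ?ps1 \<le> 1" "turns ?ps2 \<le> 1"
    by (intro turns_le_1_if_length_le_3 order.trans[OF remdups_adj_length], simp)+
  ultimately show ?thesis unfolding optimal_one_turn_schedule_def by blast
qed

definition separated_by :: "(pt \<Rightarrow> real) \<Rightarrow> (pt \<times> pt) set" where
  "separated_by \<phi> = {(p, q). \<phi> q + 1 \<le> \<phi> p}"

lemma convex_separated_by:
  assumes "linear \<phi>"
  shows "convex (separated_by \<phi>)"
proof (rule convexI)
  fix x y :: "pt \<times> pt" and u v :: real
  assume x: "x \<in> separated_by \<phi>" and y: "y \<in> separated_by \<phi>" and uv: "0 \<le> u" "0 \<le> v" "u + v = 1"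
  obtain p q p' q' where xy: "x = (p, q)" "y = (p', q')" by (meson prod.exhaust)
  have comb: "\<phi> (u *\<^sub>R r + v *\<^sub>R r') = u * \<phi> r + v * \<phi> r'" for r r'
    using assms by (simp add: linear_add linear_scale)
  have "u * (\<phi> q + 1) + v * (\<phi> q' + 1) \<le> u * \<phi> p + v * \<phi> p'"
    using x y uv unfolding xy separated_by_def by (intro add_mono mult_left_mono) auto
  then have "u * \<phi> q + v * \<phi> q' + 1 \<le> u * \<phi> p + v * \<phi> p'"
    using uv(3) by (simp add: ring_distribs)
  then show "u *\<^sub>R x + v *\<^sub>R y \<in> separated_by \<phi>"
    unfolding xy separated_by_def by (simp add: comb)
qed

lemma separated_by_subset_F2:
  assumes "\<And>p q. \<bar>\<phi> p - \<phi> q\<bar> \<le> linfdist p q"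
  shows "separated_by \<phi> \<subseteq> F2"
proof -
  have "1 \<le> linfdist p q" if "\<phi> q + 1 \<le> \<phi> p" for p q
    using assms[of p q] that by linarith
  then show ?thesis unfolding separated_by_def F2_def by auto
qed

lemma optimal_one_turn_schedule_if_separated:
  assumes "linear \<phi>" "\<And>p q. \<bar>\<phi> p - \<phi> q\<bar> \<le> linfdist p q"
    and "(a1, a2) \<in> separated_by \<phi>" "(b1, b2) \<in> separated_by \<phi>"
    and "\<phi> c1 = \<phi> a1" "\<phi> c2 = \<phi> a2"
    and "l1dist a1 c1 + l1dist c1 b1 = l1dist a1 b1" "l1dist a2 c2 + l1dist c2 b2 = l1dist a2 b2"
  shows "optimal_one_turn_schedule a1 a2 b1 b2"
proof (cases "(b1, c2) \<in> separated_by \<phi>")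
  case True
  then show ?thesis
    using assms convex_separated_by separated_by_subset_F2
    by (intro optimal_one_turn_schedule_if_vertices_in_convex[of "separated_by \<phi>"])
      (auto simp: separated_by_def)
next
  case False
  let ?\<psi> = "\<lambda>p. - \<phi> p"
  have "optimal_one_turn_schedule a2 a1 b2 b1"
  proof (rule optimal_one_turn_schedule_if_vertices_in_convex[of "separated_by ?\<psi>" a2 a1 c2 c1 b2 b1])
    show "convex (separated_by ?\<psi>)" using assms(1) by (intro convex_separated_by linear_compose_neg)
    show "separated_by ?\<psi> \<subseteq> F2"
      using assms(2) by (intro separated_by_subset_F2) (simp add: abs_minus_commute)
    show "(b2, c1) \<in> separated_by ?\<psi>" using False assms(3-6) by (auto simp: separated_by_def)
  qed (use assms in \<open>auto simp: separated_by_def\<close>)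
  then show ?thesis by (rule optimal_one_turn_schedule_commute)
qed

lemma l1dist_corner:
  "l1dist a (fst a, snd b) + l1dist (fst a, snd b) b = l1dist a b"
  "l1dist a (fst b, snd a) + l1dist (fst b, snd a) b = l1dist a b"
  unfolding l1dist_def by auto

lemma linear_scaled_coordinate: "\<pi> = fst \<or> \<pi> = snd \<Longrightarrow> linear (\<lambda>p::pt. \<sigma> * \<pi> p)"
  by (auto simp: linear_iff algebra_simps)

lemma scaled_coordinate_le_linfdist:
  "\<pi> = fst \<or> \<pi> = snd \<Longrightarrow> \<bar>\<sigma>\<bar> = 1 \<Longrightarrow> \<bar>\<sigma> * \<pi> p - \<sigma> * \<pi> q\<bar> \<le> linfdist p q"
  by (auto simp: linfdist_def abs_mult simp flip: right_diff_distrib)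

lemma optimal_one_turn_schedule_if_separated_by_fst:
  assumes "\<bar>\<sigma>\<bar> = 1"
    and "(a1, a2) \<in> separated_by (\<lambda>p. \<sigma> * fst p)" "(b1, b2) \<in> separated_by (\<lambda>p. \<sigma> * fst p)"
  shows "optimal_one_turn_schedule a1 a2 b1 b2"
  by (rule optimal_one_turn_schedule_if_separated[OF linear_scaled_coordinate
        scaled_coordinate_le_linfdist assms(2,3) _ _ l1dist_corner(1) l1dist_corner(1)])
    (use assms(1) in simp_all)

lemma optimal_one_turn_schedule_if_separated_by_snd:
  assumes "\<bar>\<sigma>\<bar> = 1"
    and "(a1, a2) \<in> separated_by (\<lambda>p. \<sigma> * snd p)" "(b1, b2) \<in> separated_by (\<lambda>p. \<sigma> * snd p)"
  shows "optimal_one_turn_schedule a1 a2 b1 b2"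
  by (rule optimal_one_turn_schedule_if_separated[OF linear_scaled_coordinate
        scaled_coordinate_le_linfdist assms(2,3) _ _ l1dist_corner(2) l1dist_corner(2)])
    (use assms(1) in simp_all)

theorem corollary3p4:
  fixes A B :: "pt \<times> pt"
  assumes "A \<in> F2" and "B \<in> F2" and "commonly_ordered A B"
  shows "\<exists>t0 t1 m1 m2 ps1 ps2.
           trajectory m1 (fst A) (fst B) t0 t1 ps1 \<and>
           trajectory m2 (snd A) (snd B) t0 t1 ps2 \<and>
           feasible m1 m2 t0 t1 \<and>
           chain_len ps1 + chain_len ps2 = l1dist (fst A) (fst B) + l1dist (snd A) (snd B) \<and>
           turns ps1 \<le> 1 \<and> turns ps2 \<le> 1"
proof -
  \<comment> \<open>The hypotheses \<open>A \<in> F2\<close> and \<open>B \<in> F2\<close> are implied by \<open>commonly_ordered A B\<close>.\<close>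
  obtain a1 a2 b1 b2 where A: "A = (a1, a2)" and B: "B = (b1, b2)" by (meson prod.exhaust)
  from assms(3) consider
      "A \<in> F2_right" "B \<in> F2_right" | "A \<in> F2_left" "B \<in> F2_left"
    | "A \<in> F2_up" "B \<in> F2_up" | "A \<in> F2_down" "B \<in> F2_down"
    unfolding commonly_ordered_def by blast
  then have "optimal_one_turn_schedule a1 a2 b1 b2"
  proof cases
    case 1
    then show ?thesis
      by (intro optimal_one_turn_schedule_if_separated_by_fst[of 1])
        (auto simp: A B F2_right_def separated_by_def)
  next
    case 2
    then show ?thesis
      by (intro optimal_one_turn_schedule_if_separated_by_fst[of "-1"])
        (auto simp: A B F2_left_def separated_by_def)
  next
    case 3
    then show ?thesis
      by (intro optimal_one_turn_schedule_if_separated_by_snd[of 1])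
        (auto simp: A B F2_up_def separated_by_def)
  next
    case 4
    then show ?thesis
      by (intro optimal_one_turn_schedule_if_separated_by_snd[of "-1"])
        (auto simp: A B F2_down_def separated_by_def)
  qed
  then show ?thesis unfolding optimal_one_turn_schedule_def A B fst_conv snd_conv .
qed

end
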